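(* Let $G$ be a graph with a clique cutset $C$, and let $V(G)\setminus C$ be partitioned into two sets $V_1,V_2$ such that there are no edges between $V_1$ and $V_2$. If $G[C\cup V_1]$ is perfect, then $G$ is not minimally non-perfectly divisible.
   Context: All graphs are finite and simple. For $S\subseteq V(G)$, $G[S]$ is the subgraph induced by $S$. $\omega(G)$ is the number of vertices in a largest clique of $G$ and $\chi(G)$ the chromatic number. A graph $G$ is perfect if $\chi(H)=\omega(H)$ for every induced subgraph $H$ of $G$. A partition $(A,B)$ of $V(G)$ is good if $G[A]$ is perfect and $\omega(G[B])<\omega(G)$. A graph $G$ is perfectly divisible if every induced subgraph $H$ of $G$ with at least one edge admits a good partition (of $V(H)$). A graph is minimally non-perfectly divisible if it is not perfectly divisible but each of its proper induced subgraphs is perfectly divisible. A set $C\subseteq V(G)$ is a clique cutset if $C$ induces a clique in $G$ and $G-C$ is disconnected. *)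

theory Defs
  imports Main
begin

text \<open>Induced subgraphs G[S] (S a subset of V) are
represented by the vertex set S together with the same relation E.\<close>

definition simple_graph :: "'a set \<Rightarrow> ('a \<Rightarrow> 'a \<Rightarrow> bool) \<Rightarrow> bool" where
  "simple_graph V E \<longleftrightarrow> finite V \<and> (\<forall>x y. E x y \<longrightarrow> E y x) \<and> (\<forall>x. \<not> E x x)"

definition is_clique :: "('a \<Rightarrow> 'a \<Rightarrow> bool) \<Rightarrow> 'a set \<Rightarrow> 'a set \<Rightarrow> bool" where
  "is_clique E S K \<longleftrightarrow> K \<subseteq> S \<and> (\<forall>x\<in>K. \<forall>y\<in>K. x \<noteq> y \<longrightarrow> E x y)"

definition clique_number :: "('a \<Rightarrow> 'a \<Rightarrow> bool) \<Rightarrow> 'a set \<Rightarrow> nat" where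
  "clique_number E S = Max {card K | K. is_clique E S K}"

definition is_colouring :: "('a \<Rightarrow> 'a \<Rightarrow> bool) \<Rightarrow> 'a set \<Rightarrow> nat \<Rightarrow> ('a \<Rightarrow> nat) \<Rightarrow> bool" where
  "is_colouring E S k f \<longleftrightarrow> (\<forall>x\<in>S. f x < k) \<and> (\<forall>x\<in>S. \<forall>y\<in>S. E x y \<longrightarrow> f x \<noteq> f y)"

definition chromatic_number :: "('a \<Rightarrow> 'a \<Rightarrow> bool) \<Rightarrow> 'a set \<Rightarrow> nat" where
  "chromatic_number E S = (LEAST k. \<exists>f. is_colouring E S k f)"

definition perfect :: "('a \<Rightarrow> 'a \<Rightarrow> bool) \<Rightarrow> 'a set \<Rightarrow> bool" where
  "perfect E S \<longleftrightarrow> (\<forall>H \<subseteq> S. chromatic_number E H = clique_number E H)"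

definition good_partition :: "('a \<Rightarrow> 'a \<Rightarrow> bool) \<Rightarrow> 'a set \<Rightarrow> 'a set \<Rightarrow> 'a set \<Rightarrow> bool" where
  "good_partition E S A B \<longleftrightarrow> A \<union> B = S \<and> A \<inter> B = {} \<and> perfect E A
     \<and> clique_number E B < clique_number E S"

definition has_edge :: "('a \<Rightarrow> 'a \<Rightarrow> bool) \<Rightarrow> 'a set \<Rightarrow> bool" where
  "has_edge E S \<longleftrightarrow> (\<exists>x\<in>S. \<exists>y\<in>S. E x y)"

definition perfectly_divisible :: "('a \<Rightarrow> 'a \<Rightarrow> bool) \<Rightarrow> 'a set \<Rightarrow> bool" where
  "perfectly_divisible E S \<longleftrightarrow>
     (\<forall>H \<subseteq> S. has_edge E H \<longrightarrow> (\<exists>A B. good_partition E H A B))"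

definition minimally_non_perfectly_divisible :: "('a \<Rightarrow> 'a \<Rightarrow> bool) \<Rightarrow> 'a set \<Rightarrow> bool" where
  "minimally_non_perfectly_divisible E S \<longleftrightarrow>
     \<not> perfectly_divisible E S \<and> (\<forall>H. H \<subset> S \<longrightarrow> perfectly_divisible E H)"

definition graph_connected :: "('a \<Rightarrow> 'a \<Rightarrow> bool) \<Rightarrow> 'a set \<Rightarrow> bool" where
  "graph_connected E S \<longleftrightarrow>
     (\<forall>x\<in>S. \<forall>y\<in>S. (x, y) \<in> {(u, v). u \<in> S \<and> v \<in> S \<and> E u v}\<^sup>*)"

definition clique_cutset :: "'a set \<Rightarrow> ('a \<Rightarrow> 'a \<Rightarrow> bool) \<Rightarrow> 'a set \<Rightarrow> bool" where
  "clique_cutset V E C \<longleftrightarrow> is_clique E V C \<and> \<not> graph_connected E (V - C)"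

end

theory Submission
  imports Defs
begin

text \<open>Suppose G is minimally non-perfectly divisible; then G itself has an edge but no good
partition. Its proper induced subgraph G[C \<union> V2] is perfectly divisible. If G[C \<union> V2] has
a good partition (A, B), then (A \<union> V1, B) is a good partition of G: the graph G[A \<union> V1]
is obtained by gluing the perfect graphs G[(A \<inter> C) \<union> V1] and G[A] along the clique A \<inter> C,
and gluing along a clique preserves perfection, because the chromatic number of such a
clique sum is the maximum of the chromatic numbers of its pieces. If G[C \<union> V2] has no
edge, then (C \<union> V1, V2) is a good partition of G, since \<omega>(G[V2]) \<le> 1 < 2 \<le> \<omega>(G).\<close>

lemma finite_clique_sizes:
  assumes "finite S"
  shows "finite {card K | K. is_clique E S K}"
proof -
  have "{card K | K. is_clique E S K} \<subseteq> card ` Pow S"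
    unfolding is_clique_def by auto
  then show ?thesis
    using assms by (simp add: finite_subset)
qed

lemma card_le_clique_number:
  "finite S \<Longrightarrow> is_clique E S K \<Longrightarrow> card K \<le> clique_number E S"
  unfolding clique_number_def by (auto intro: Max_ge finite_clique_sizes)

lemma clique_number_attained:
  assumes "finite S"
  obtains K where "is_clique E S K" "card K = clique_number E S"
proof -
  have "is_clique E S {}"
    unfolding is_clique_def by simp
  then have "clique_number E S \<in> {card K | K. is_clique E S K}"
    unfolding clique_number_def using finite_clique_sizes[OF assms] by (intro Max_in) auto
  then show ?thesis
    using that by force
qed

lemma is_clique_mono: "is_clique E S K \<Longrightarrow> S \<subseteq> T \<Longrightarrow> is_clique E T K"
  unfolding is_clique_def by blast

lemma clique_number_mono:
  assumes "finite T" "S \<subseteq> T"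
  shows "clique_number E S \<le> clique_number E T"
proof -
  obtain K where "is_clique E S K" "card K = clique_number E S"
    using clique_number_attained assms finite_subset by metis
  then show ?thesis
    using card_le_clique_number[OF assms(1)] is_clique_mono[OF _ assms(2)] by metis
qed

lemma clique_number_le_1_if_no_edge:
  assumes "finite S" "\<not> has_edge E S"
  shows "clique_number E S \<le> 1"
proof -
  obtain K where K: "is_clique E S K" "card K = clique_number E S"
    using clique_number_attained[OF assms(1)] .
  then have "finite K"
    using assms(1) unfolding is_clique_def by (blast intro: finite_subset)
  moreover have "\<forall>x\<in>K. \<forall>y\<in>K. x = y"
    using K(1) assms(2) unfolding is_clique_def has_edge_def by blast
  ultimately show ?thesis
    using K(2) card_le_Suc0_iff_eq by fastforce
qed

lemma two_le_clique_number_if_has_edge: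
  assumes "simple_graph V E" "S \<subseteq> V" "has_edge E S"
  shows "2 \<le> clique_number E S"
proof -
  obtain x y where xy: "x \<in> S" "y \<in> S" "E x y"
    using assms(3) unfolding has_edge_def by blast
  with assms(1) have "x \<noteq> y" "E y x"
    unfolding simple_graph_def by auto
  with xy have "is_clique E S {x, y}"
    unfolding is_clique_def by auto
  moreover have "finite S"
    using assms(1,2) unfolding simple_graph_def by (blast intro: finite_subset)
  ultimately show ?thesis
    using card_le_clique_number \<open>x \<noteq> y\<close> by fastforce
qed

lemma is_colouring_mono: "is_colouring E S k f \<Longrightarrow> k \<le> l \<Longrightarrow> is_colouring E S l f"
  unfolding is_colouring_def by auto

lemma chromatic_number_le: "is_colouring E S k f \<Longrightarrow> chromatic_number E S \<le> k"
  unfolding chromatic_number_def by (rule Least_le) blast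

lemma chromatic_number_attained:
  assumes "finite S" "\<forall>x. \<not> E x x"
  obtains f where "is_colouring E S (chromatic_number E S) f"
proof -
  obtain h where h: "bij_betw h S {0..<card S}"
    using ex_bij_betw_finite_nat[OF assms(1)] ..
  have "is_colouring E S (card S) h"
    unfolding is_colouring_def
  proof (intro conjI ballI impI)
    fix x assume "x \<in> S"
    then show "h x < card S"
      using bij_betw_apply[OF h] by simp
  next
    fix x y assume "x \<in> S" "y \<in> S" "E x y"
    then show "h x \<noteq> h y"
      using assms(2) by (auto simp: inj_on_eq_iff[OF bij_betw_imp_inj_on[OF h]])
  qed
  then have "\<exists>f. is_colouring E S (chromatic_number E S) f"
    using LeastI_ex[of "\<lambda>k. \<exists>f. is_colouring E S k f"] unfolding chromatic_number_def by blast
  then show ?thesis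
    using that by blast
qed

lemma inj_on_clique_if_colouring:
  "is_colouring E S k f \<Longrightarrow> is_clique E S K \<Longrightarrow> inj_on f K"
  unfolding is_colouring_def is_clique_def inj_on_def by blast

lemma clique_number_le_chromatic_number:
  assumes "finite S" "\<forall>x. \<not> E x x"
  shows "clique_number E S \<le> chromatic_number E S"
proof -
  obtain f where f: "is_colouring E S (chromatic_number E S) f"
    using chromatic_number_attained[where E = E, OF assms] .
  obtain K where K: "is_clique E S K" "card K = clique_number E S"
    using clique_number_attained[OF assms(1)] .
  have "card K = card (f ` K)"
    using inj_on_clique_if_colouring[OF f K(1)] by (simp add: card_image)
  also have "\<dots> \<le> card {..<chromatic_number E S}"
    using f K(1) unfolding is_colouring_def is_clique_def by (intro card_mono) auto
  finally show ?thesis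
    using K(2) by simp
qed

lemma bij_betw_matching_injections:
  assumes "finite S" "inj_on f K" "inj_on g K" "f ` K \<subseteq> S" "g ` K \<subseteq> S"
  obtains \<pi> where "bij_betw \<pi> S S" "\<forall>x\<in>K. \<pi> (g x) = f x"
proof -
  have fK: "finite K"
    using assms(1,3,5) finite_image_iff finite_subset by metis
  have on_image: "bij_betw (f \<circ> inv_into K g) (g ` K) (f ` K)"
    using assms(2,3) by (blast intro: bij_betw_trans bij_betw_inv_into inj_on_imp_bij_betw)
  have "card (S - g ` K) = card (S - f ` K)"
    using assms fK by (simp add: card_Diff_subset card_image)
  then obtain \<psi> where off_image: "bij_betw \<psi> (S - g ` K) (S - f ` K)"
    using assms(1) finite_same_card_bij by blast
  define \<pi> where "\<pi> c = (if c \<in> g ` K then (f \<circ> inv_into K g) c else \<psi> c)" for c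
  have "bij_betw \<pi> (g ` K) (f ` K)"
    by (rule bij_betw_cong[THEN iffD1, OF _ on_image]) (simp add: \<pi>_def)
  moreover have "bij_betw \<pi> (S - g ` K) (S - f ` K)"
    by (rule bij_betw_cong[THEN iffD1, OF _ off_image]) (simp add: \<pi>_def)
  ultimately have "bij_betw \<pi> (g ` K \<union> (S - g ` K)) (f ` K \<union> (S - f ` K))"
    by (rule bij_betw_combine) blast
  moreover have "\<forall>x\<in>K. \<pi> (g x) = f x"
    using assms(3) by (simp add: \<pi>_def)
  ultimately show ?thesis
    using that assms(4,5) by (simp add: Un_absorb1)
qed

lemma is_colouring_comp_bij:
  assumes g: "is_colouring E S k g" and \<pi>: "bij_betw \<pi> {..<k} {..<k}"
  shows "is_colouring E S k (\<pi> \<circ> g)"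
  unfolding is_colouring_def
proof (intro conjI ballI impI)
  fix x assume "x \<in> S"
  then have "g x \<in> {..<k}"
    using g unfolding is_colouring_def by simp
  then show "(\<pi> \<circ> g) x < k"
    using bij_betw_apply[OF \<pi>] by simp
next
  fix x y assume "x \<in> S" "y \<in> S" "E x y"
  then have "g x \<noteq> g y" "g x \<in> {..<k}" "g y \<in> {..<k}"
    using g unfolding is_colouring_def by simp_all
  then show "(\<pi> \<circ> g) x \<noteq> (\<pi> \<circ> g) y"
    by (simp add: inj_on_eq_iff[OF bij_betw_imp_inj_on[OF \<pi>]])
qed

lemma is_colouring_glue:
  assumes f: "is_colouring E P k f" and g: "is_colouring E Q k g"
    and agree: "\<forall>x\<in>P \<inter> Q. f x = g x"
    and edges: "\<And>x y. x \<in> P \<union> Q \<Longrightarrow> y \<in> P \<union> Q \<Longrightarrow> E x y \<Longrightarrow> {x, y} \<subseteq> P \<or> {x, y} \<subseteq> Q"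
  shows "is_colouring E (P \<union> Q) k (\<lambda>x. if x \<in> P then f x else g x)"
  unfolding is_colouring_def
proof (intro conjI ballI impI)
  fix x assume "x \<in> P \<union> Q"
  then show "(if x \<in> P then f x else g x) < k"
    using f g unfolding is_colouring_def by auto
next
  fix x y assume xy: "x \<in> P \<union> Q" "y \<in> P \<union> Q" "E x y"
  then consider "{x, y} \<subseteq> P" | "{x, y} \<subseteq> Q"
    using edges by blast
  then show "(if x \<in> P then f x else g x) \<noteq> (if y \<in> P then f y else g y)"
  proof cases
    case 1
    then show ?thesis
      using f xy(3) unfolding is_colouring_def by simp
  next
    case 2
    then show ?thesis
      using g agree xy(3) unfolding is_colouring_def by auto
  qed
qed

lemma chromatic_number_clique_sum:
  assumes fin: "finite (P \<union> Q)" and irrefl: "\<forall>x. \<not> E x x"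
    and clique: "is_clique E (P \<union> Q) (P \<inter> Q)"
    and edges: "\<And>x y. x \<in> P \<union> Q \<Longrightarrow> y \<in> P \<union> Q \<Longrightarrow> E x y \<Longrightarrow> {x, y} \<subseteq> P \<or> {x, y} \<subseteq> Q"
  shows "chromatic_number E (P \<union> Q) \<le> max (chromatic_number E P) (chromatic_number E Q)"
proof -
  define m where "m = max (chromatic_number E P) (chromatic_number E Q)"
  have "finite P" "finite Q"
    using fin by simp_all
  obtain f where "is_colouring E P (chromatic_number E P) f"
    using chromatic_number_attained[where E = E, OF \<open>finite P\<close> irrefl] .
  then have f: "is_colouring E P m f"
    by (rule is_colouring_mono) (simp add: m_def)
  obtain g where "is_colouring E Q (chromatic_number E Q) g"
    using chromatic_number_attained[where E = E, OF \<open>finite Q\<close> irrefl] .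
  then have g: "is_colouring E Q m g"
    by (rule is_colouring_mono) (simp add: m_def)
  have "is_clique E P (P \<inter> Q)" "is_clique E Q (P \<inter> Q)"
    using clique unfolding is_clique_def by auto
  then have "inj_on f (P \<inter> Q)" "inj_on g (P \<inter> Q)"
    using inj_on_clique_if_colouring f g by blast+
  moreover have "f ` (P \<inter> Q) \<subseteq> {..<m}" "g ` (P \<inter> Q) \<subseteq> {..<m}"
    using f g unfolding is_colouring_def by auto
  ultimately obtain \<pi> where \<pi>: "bij_betw \<pi> {..<m} {..<m}" "\<forall>x\<in>P \<inter> Q. \<pi> (g x) = f x"
    using bij_betw_matching_injections[of "{..<m}" f "P \<inter> Q" g] by blast
  have "is_colouring E (P \<union> Q) m (\<lambda>x. if x \<in> P then f x else (\<pi> \<circ> g) x)"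
    by (rule is_colouring_glue[OF f is_colouring_comp_bij[OF g \<pi>(1)] _ edges]) (use \<pi>(2) in simp)
  then show ?thesis
    unfolding m_def by (rule chromatic_number_le)
qed

lemma perfect_subset: "perfect E S \<Longrightarrow> T \<subseteq> S \<Longrightarrow> perfect E T"
  unfolding perfect_def by blast

lemma perfect_clique_sum:
  assumes fin: "finite (P \<union> Q)" and irrefl: "\<forall>x. \<not> E x x"
    and perfect: "perfect E P" "perfect E Q"
    and clique: "is_clique E (P \<union> Q) (P \<inter> Q)"
    and edges: "\<And>x y. x \<in> P \<union> Q \<Longrightarrow> y \<in> P \<union> Q \<Longrightarrow> E x y \<Longrightarrow> {x, y} \<subseteq> P \<or> {x, y} \<subseteq> Q"
  shows "perfect E (P \<union> Q)"
  unfolding perfect_def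
proof (intro allI impI)
  fix H assume H: "H \<subseteq> P \<union> Q"
  then have fin_H: "finite H"
    using fin by (rule finite_subset)
  have split_H: "(H \<inter> P) \<union> (H \<inter> Q) = H"
    using H by blast
  have clique_H: "is_clique E ((H \<inter> P) \<union> (H \<inter> Q)) ((H \<inter> P) \<inter> (H \<inter> Q))"
    using clique unfolding is_clique_def by blast
  have edges_H: "{x, y} \<subseteq> H \<inter> P \<or> {x, y} \<subseteq> H \<inter> Q"
    if "x \<in> (H \<inter> P) \<union> (H \<inter> Q)" "y \<in> (H \<inter> P) \<union> (H \<inter> Q)" "E x y" for x y
    using edges[of x y] that by blast
  have "chromatic_number E H
      \<le> max (chromatic_number E (H \<inter> P)) (chromatic_number E (H \<inter> Q))"
    using chromatic_number_clique_sum[OF _ irrefl clique_H edges_H] fin_H split_H by simp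
  also have "\<dots> = max (clique_number E (H \<inter> P)) (clique_number E (H \<inter> Q))"
    using perfect unfolding perfect_def by simp
  also have "\<dots> \<le> clique_number E H"
    using clique_number_mono[OF fin_H] by simp
  finally show "chromatic_number E H = clique_number E H"
    using clique_number_le_chromatic_number[where E = E, OF fin_H irrefl] by simp
qed

lemma minimally_non_perfectly_divisible_no_good_partition:
  assumes "minimally_non_perfectly_divisible E V"
  shows "has_edge E V" "\<not> (\<exists>A B. good_partition E V A B)"
proof -
  obtain H where H: "H \<subseteq> V" "has_edge E H" "\<not> (\<exists>A B. good_partition E H A B)"
    using assms unfolding minimally_non_perfectly_divisible_def perfectly_divisible_def by blast
  have "H = V"
  proof (rule ccontr)
    assume "H \<noteq> V"
    with H(1) have "perfectly_divisible E H"
      using assms unfolding minimally_non_perfectly_divisible_def by blast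
    with H show False
      unfolding perfectly_divisible_def by blast
  qed
  with H show "has_edge E V" "\<not> (\<exists>A B. good_partition E V A B)"
    by simp_all
qed

lemma good_partition_if_edgeless_part:
  assumes "simple_graph V E" "has_edge E V"
    and "A \<union> B = V" "A \<inter> B = {}" "perfect E A" "\<not> has_edge E B"
  shows "good_partition E V A B"
proof -
  have "finite B"
    using assms(1,3) unfolding simple_graph_def by blast
  then have "clique_number E B \<le> 1"
    using assms(6) by (rule clique_number_le_1_if_no_edge)
  moreover have "2 \<le> clique_number E V"
    using two_le_clique_number_if_has_edge[OF assms(1) order_refl assms(2)] .
  ultimately show ?thesis
    using assms(3-5) unfolding good_partition_def by simp
qed

lemma good_partition_extend:
  assumes graph: "simple_graph V E" and clique: "is_clique E V C"
    and parts: "V1 \<union> V2 = V - C" "V1 \<inter> V2 = {}"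
    and no_edges: "\<forall>x\<in>V1. \<forall>y\<in>V2. \<not> E x y"
    and perfect: "perfect E (C \<union> V1)"
    and good: "good_partition E (C \<union> V2) A B"
  shows "good_partition E V (A \<union> V1) B"
proof -
  have fin: "finite V" and sym: "\<forall>x y. E x y \<longrightarrow> E y x" and irrefl: "\<forall>x. \<not> E x x"
    using graph unfolding simple_graph_def by auto
  have C: "C \<subseteq> V"
    using clique unfolding is_clique_def by blast
  have A: "A \<union> B = C \<union> V2" "A \<inter> B = {}" "perfect E A"
    and B: "clique_number E B < clique_number E (C \<union> V2)"
    using good unfolding good_partition_def by auto
  have "perfect E (((A \<inter> C) \<union> V1) \<union> A)"
  proof (rule perfect_clique_sum)
    show "finite ((A \<inter> C) \<union> V1 \<union> A)"
      by (rule finite_subset[OF _ fin]) (use C parts(1) A(1) in blast)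
    show "perfect E ((A \<inter> C) \<union> V1)"
      using perfect by (rule perfect_subset) blast
    have "((A \<inter> C) \<union> V1) \<inter> A \<subseteq> C"
      using parts A(1) by blast
    then show "is_clique E ((A \<inter> C) \<union> V1 \<union> A) (((A \<inter> C) \<union> V1) \<inter> A)"
      using clique unfolding is_clique_def by auto
    show "{x, y} \<subseteq> (A \<inter> C) \<union> V1 \<or> {x, y} \<subseteq> A"
      if "x \<in> (A \<inter> C) \<union> V1 \<union> A" "y \<in> (A \<inter> C) \<union> V1 \<union> A" "E x y" for x y
    proof (rule ccontr)
      assume "\<not> ?thesis"
      with that(1,2) have "x \<in> V1 \<and> y \<in> A - C \<or> y \<in> V1 \<and> x \<in> A - C"
        by blast
      moreover have "A - C \<subseteq> V2"
        using A(1) by blast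
      ultimately show False
        using no_edges sym that(3) by blast
    qed
  qed (use irrefl A(3) in auto)
  moreover have "((A \<inter> C) \<union> V1) \<union> A = A \<union> V1"
    by blast
  moreover have "clique_number E (C \<union> V2) \<le> clique_number E V"
    by (rule clique_number_mono[OF fin]) (use C parts(1) in blast)
  moreover have "(A \<union> V1) \<union> B = V" "(A \<union> V1) \<inter> B = {}"
    using A(1,2) C parts by blast+
  ultimately show ?thesis
    using B unfolding good_partition_def by simp
qed

theorem lemma4:
  fixes V :: "'a set" and E :: "'a \<Rightarrow> 'a \<Rightarrow> bool" and C V1 V2 :: "'a set"
  assumes "simple_graph V E"
    and "clique_cutset V E C"
    and "V1 \<union> V2 = V - C" and "V1 \<inter> V2 = {}" and "V1 \<noteq> {}" and "V2 \<noteq> {}"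
    and "\<forall>x\<in>V1. \<forall>y\<in>V2. \<not> E x y"
    and "perfect E (C \<union> V1)"
  shows "\<not> minimally_non_perfectly_divisible E V"
proof
  assume mnpd: "minimally_non_perfectly_divisible E V"
  have clique: "is_clique E V C"
    using assms(2) unfolding clique_cutset_def by blast
  then have "C \<union> V2 \<subset> V"
    using assms(3-5) unfolding is_clique_def by blast
  then have "perfectly_divisible E (C \<union> V2)"
    using mnpd unfolding minimally_non_perfectly_divisible_def by blast
  have "\<exists>A B. good_partition E V A B"
  proof (cases "has_edge E (C \<union> V2)")
    case True
    then obtain A B where "good_partition E (C \<union> V2) A B"
      using \<open>perfectly_divisible E (C \<union> V2)\<close> unfolding perfectly_divisible_def by blast
    then show ?thesis
      using good_partition_extend[OF assms(1) clique assms(3,4,7,8)] by blast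
  next
    case False
    then have "\<not> has_edge E V2"
      unfolding has_edge_def by blast
    moreover have "(C \<union> V1) \<union> V2 = V" "(C \<union> V1) \<inter> V2 = {}"
      using clique assms(3,4) unfolding is_clique_def by blast+
    ultimately have "good_partition E V (C \<union> V1) V2"
      using good_partition_if_edgeless_part[OF assms(1)
          minimally_non_perfectly_divisible_no_good_partition(1)[OF mnpd] _ _ assms(8)]
      by blast
    then show ?thesis
      by blast
  qed
  with mnpd show False
    using minimally_non_perfectly_divisible_no_good_partition(2) by blast
qed

end
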